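(* Let $F=(C_1,\dots,C_m)$ be a flag of almost affine codes of length $n$ over a finite alphabet $A$, and let $r_i$ be the rank function of the matroid associated to $C_i$. Then $(E,\rho_F)$, where $E=\{1,\dots,n\}$ and $\rho_F(X)=\sum_{i=1}^m(-1)^{i+1}r_i(X)$, is a demi-matroid.
   Context: An almost affine code over a finite alphabet $A$ of length $n$ and dimension $k$ is a subset $C\subseteq A^n$ with $|C|=|A|^k$ such that for every $X\subseteq E=\{1,\dots,n\}$, $\log_{|A|}|C_X|$ is a nonnegative integer, where $C_X$ is the projection of $C$ onto the coordinates in $X$; its associated matroid has rank function $r(X)=\log_{|A|}|C_X|$. An almost affine subcode of $C$ is a subset of $C$ that is itself an almost affine code over the same alphabet. A flag of almost affine codes is a sequence $(C_1,\dots,C_m)$ of almost affine codes over the same alphabet and of the same length such that $C_{j+1}$ is an almost affine subcode of $C_j$ for $1\le j\le m-1$. A demi-matroid is a pair $(E,r)$ with $r:2^E\to\mathbb{N}$ satisfying $r(\emptyset)=0$ and $r(X)\le r(X\cup\{x\})\le r(X)+1$ for all $X\subseteq E$, $x\in E$. *)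

theory Defs
  imports Complex_Main "HOL-Library.FuncSet"
begin

definition words :: "'a set \<Rightarrow> nat \<Rightarrow> (nat \<Rightarrow> 'a) set" where
  "words A n = PiE {1..n} (\<lambda>_. A)"

definition proj :: "(nat \<Rightarrow> 'a) set \<Rightarrow> nat set \<Rightarrow> (nat \<Rightarrow> 'a) set" where
  "proj C X = (\<lambda>c. restrict c X) ` C"

definition code_rank :: "'a set \<Rightarrow> (nat \<Rightarrow> 'a) set \<Rightarrow> nat set \<Rightarrow> nat" where
  "code_rank A C X = nat \<lfloor>log (real (card A)) (real (card (proj C X)))\<rfloor>"

definition almost_affine_code :: "'a set \<Rightarrow> nat \<Rightarrow> nat \<Rightarrow> (nat \<Rightarrow> 'a) set \<Rightarrow> bool" where
  "almost_affine_code A n k C \<longleftrightarrow>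
     finite A \<and> C \<subseteq> words A n \<and> card C = card A ^ k \<and>
     (\<forall>X \<subseteq> {1..n}. log (real (card A)) (real (card (proj C X))) \<in> \<nat>)"

definition is_almost_affine :: "'a set \<Rightarrow> nat \<Rightarrow> (nat \<Rightarrow> 'a) set \<Rightarrow> bool" where
  "is_almost_affine A n C \<longleftrightarrow> (\<exists>k. almost_affine_code A n k C)"

definition is_flag :: "'a set \<Rightarrow> nat \<Rightarrow> nat \<Rightarrow> (nat \<Rightarrow> (nat \<Rightarrow> 'a) set) \<Rightarrow> bool" where
  "is_flag A n m Cs \<longleftrightarrow>
     (\<forall>i \<in> {1..m}. is_almost_affine A n (Cs i)) \<and>
     (\<forall>j \<in> {1..<m}. Cs (Suc j) \<subseteq> Cs j)"

definition flag_rho :: "'a set \<Rightarrow> nat \<Rightarrow> (nat \<Rightarrow> (nat \<Rightarrow> 'a) set) \<Rightarrow> nat set \<Rightarrow> int" where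
  "flag_rho A m Cs X = (\<Sum>i = 1..m. (-1) ^ (i + 1) * int (code_rank A (Cs i) X))"

text \<open>Demi-matroid (E, r) with r : 2^E \<rightarrow> \<nat>; r is given as an int-valued function,
so nonnegativity on subsets of E is part of the definition.\<close>
definition demi_matroid :: "'e set \<Rightarrow> ('e set \<Rightarrow> int) \<Rightarrow> bool" where
  "demi_matroid E r \<longleftrightarrow>
     (\<forall>X \<subseteq> E. 0 \<le> r X) \<and> r {} = 0 \<and>
     (\<forall>X \<subseteq> E. \<forall>x \<in> E. r X \<le> r (insert x X) \<and> r (insert x X) \<le> r X + 1)"

end

theory Submission
  imports Defs
begin

text \<open>Each rank function r_i increases by 0 or 1 when a coordinate is added, and passing
to a subcode can only turn an increase of 1 into 0: if adding x does not enlarge C_X, the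
restriction map from C_{X+x} to C_X is injective, hence so is its restriction to the
subcode. So both r_i(X) and the increments r_i(X+x) - r_i(X) are nonincreasing in i, and
an alternating sum of a nonincreasing nonnegative sequence lies between 0 and its first
term. Applied to the ranks this gives the nonnegativity of rho_F, applied to the
increments the bounds 0 and 1 on the increments of rho_F.\<close>

lemma alternating_sum_antimono_bounds:
  fixes f :: "nat \<Rightarrow> int"
  assumes "\<And>i. 1 \<le> i \<Longrightarrow> i < m \<Longrightarrow> f (Suc i) \<le> f i"
    and "\<And>i. i \<in> {1..m} \<Longrightarrow> 0 \<le> f i"
  shows "0 \<le> (\<Sum>i = 1..m. (-1) ^ (i + 1) * f i) \<and>
         (\<Sum>i = 1..m. (-1) ^ (i + 1) * f i) \<le> max 0 (f 1)"
  using assms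
proof (induction m arbitrary: f)
  case 0
  then show ?case by simp
next
  case (Suc m)
  have peel_first: "(\<Sum>i = 1..Suc m. (-1) ^ (i + 1) * f i)
      = f 1 - (\<Sum>i = 1..m. (-1) ^ (i + 1) * f (Suc i))"
  proof -
    have "(\<Sum>i = 1..Suc m. (-1) ^ (i + 1) * f i)
        = f 1 + (\<Sum>i = Suc 1..Suc m. (-1) ^ (i + 1) * f i)"
      by (subst sum.atLeast_Suc_atMost) auto
    also have "(\<Sum>i = Suc 1..Suc m. (-1) ^ (i + 1) * f i)
        = (\<Sum>i = 1..m. (-1) ^ (Suc i + 1) * f (Suc i))"
      by (rule sum.shift_bounds_cl_Suc_ivl)
    also have "\<dots> = - (\<Sum>i = 1..m. (-1) ^ (i + 1) * f (Suc i))"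
      by (simp add: sum_negf[symmetric])
    finally show ?thesis by simp
  qed
  have IH: "0 \<le> (\<Sum>i = 1..m. (-1) ^ (i + 1) * f (Suc i)) \<and>
            (\<Sum>i = 1..m. (-1) ^ (i + 1) * f (Suc i)) \<le> max 0 (f 2)"
    using Suc.IH[of "f \<circ> Suc"] Suc.prems by (auto simp: numeral_2_eq_2)
  have "0 \<le> f 1" using Suc.prems(2) by auto
  moreover have "m \<noteq> 0 \<Longrightarrow> 0 \<le> f 2 \<and> f 2 \<le> f 1"
    using Suc.prems(1)[of 1] Suc.prems(2)[of 2] by (auto simp: numeral_2_eq_2)
  ultimately show ?case
    using peel_first IH by (cases "m = 0") auto
qed

lemma demi_matroid_alternating_sum:
  fixes r :: "nat \<Rightarrow> 'e set \<Rightarrow> nat"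
  assumes empty: "\<And>i. i \<in> {1..m} \<Longrightarrow> r i {} = 0"
    and unit_increase: "\<And>i X x. i \<in> {1..m} \<Longrightarrow> X \<subseteq> E \<Longrightarrow> x \<in> E \<Longrightarrow>
           r i X \<le> r i (insert x X) \<and> r i (insert x X) \<le> r i X + 1"
    and antimono: "\<And>i X. 1 \<le> i \<Longrightarrow> i < m \<Longrightarrow> X \<subseteq> E \<Longrightarrow> r (Suc i) X \<le> r i X"
    and increment_antimono: "\<And>i X x. 1 \<le> i \<Longrightarrow> i < m \<Longrightarrow> X \<subseteq> E \<Longrightarrow> x \<in> E \<Longrightarrow>
           int (r (Suc i) (insert x X)) - int (r (Suc i) X) \<le> int (r i (insert x X)) - int (r i X)"
  shows "demi_matroid E (\<lambda>X. \<Sum>i = 1..m. (-1) ^ (i + 1) * int (r i X))"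
  unfolding demi_matroid_def
proof (intro conjI allI impI ballI)
  let ?\<rho> = "\<lambda>X. \<Sum>i = 1..m. (-1) ^ (i + 1) * int (r i X)"
  fix X assume "X \<subseteq> E"
  then show "0 \<le> ?\<rho> X"
    using alternating_sum_antimono_bounds[of m "\<lambda>i. int (r i X)"] antimono by auto
next
  show "(\<Sum>i = 1..m. (-1) ^ (i + 1) * int (r i {})) = 0"
    using empty by simp
next
  let ?\<rho> = "\<lambda>X. \<Sum>i = 1..m. (-1) ^ (i + 1) * int (r i X)"
  fix X x assume X: "X \<subseteq> E" and x: "x \<in> E"
  define d where "d i = int (r i (insert x X)) - int (r i X)" for i
  have increment: "?\<rho> (insert x X) - ?\<rho> X = (\<Sum>i = 1..m. (-1) ^ (i + 1) * d i)"
    unfolding d_def by (simp add: sum_subtractf[symmetric] algebra_simps)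
  have "0 \<le> (\<Sum>i = 1..m. (-1) ^ (i + 1) * d i) \<and>
        (\<Sum>i = 1..m. (-1) ^ (i + 1) * d i) \<le> max 0 (d 1)"
    using alternating_sum_antimono_bounds[of m d] increment_antimono[OF _ _ X x]
      unit_increase[OF _ X x] unfolding d_def by auto
  moreover have "m \<noteq> 0 \<Longrightarrow> d 1 \<le> 1"
    using unit_increase[OF _ X x, of 1] unfolding d_def by auto
  ultimately have "0 \<le> ?\<rho> (insert x X) - ?\<rho> X \<and> ?\<rho> (insert x X) - ?\<rho> X \<le> 1"
    using increment by (cases "m = 0") auto
  then show "?\<rho> X \<le> ?\<rho> (insert x X)" and "?\<rho> (insert x X) \<le> ?\<rho> X + 1"
    by linarith+
qed

lemma proj_subset_image:
  assumes "Y \<subseteq> X"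
  shows "proj C Y = (\<lambda>f. restrict f Y) ` proj C X"
  unfolding proj_def image_image using assms
  by (auto simp: restrict_def fun_eq_iff intro!: image_cong)

lemma finite_proj: "finite C \<Longrightarrow> finite (proj C X)"
  unfolding proj_def by simp

lemma card_proj_mono:
  assumes "finite C" "Y \<subseteq> X"
  shows "card (proj C Y) \<le> card (proj C X)"
  unfolding proj_subset_image[OF assms(2), of C]
  using assms(1) by (intro card_image_le finite_proj)

lemma card_proj_subcode_le:
  assumes "D \<subseteq> C" "finite C"
  shows "card (proj D X) \<le> card (proj C X)"
  using assms unfolding proj_def by (intro card_mono) auto

lemma card_proj_insert_le:
  assumes "finite A" "finite C" "\<And>c. c \<in> C \<Longrightarrow> c x \<in> A"
  shows "card (proj C (insert x X)) \<le> card (proj C X) * card A"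
proof -
  let ?extend = "\<lambda>(f, a). f(x := a)"
  have "proj C (insert x X) \<subseteq> ?extend ` (proj C X \<times> A)"
  proof
    fix g assume "g \<in> proj C (insert x X)"
    then obtain c where c: "c \<in> C" "g = restrict c (insert x X)"
      unfolding proj_def by auto
    then have "g = ?extend (restrict c X, c x)"
      by (auto simp: restrict_def)
    moreover have "(restrict c X, c x) \<in> proj C X \<times> A"
      using c(1) assms(3) unfolding proj_def by auto
    ultimately show "g \<in> ?extend ` (proj C X \<times> A)" by blast
  qed
  then have "card (proj C (insert x X)) \<le> card (?extend ` (proj C X \<times> A))"
    using assms(1,2) by (intro card_mono) (auto intro: finite_proj)
  also have "\<dots> \<le> card (proj C X \<times> A)"
    by (rule card_image_le) (use assms(1,2) finite_proj in auto)
  finally show ?thesis by (simp add: card_cartesian_product)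
qed

lemma card_proj_insert_eq_subcode:
  assumes "D \<subseteq> C" "finite C" "card (proj C (insert x X)) = card (proj C X)"
  shows "card (proj D (insert x X)) = card (proj D X)"
proof -
  let ?res = "\<lambda>f. restrict f X"
  have "card (?res ` proj C (insert x X)) = card (proj C (insert x X))"
    using assms(3) proj_subset_image[of X "insert x X" C, OF subset_insertI] by simp
  then have "inj_on ?res (proj C (insert x X))"
    using assms(2) by (simp add: inj_on_iff_eq_card finite_proj)
  moreover have "proj D (insert x X) \<subseteq> proj C (insert x X)"
    using assms(1) unfolding proj_def by auto
  ultimately have "inj_on ?res (proj D (insert x X))"
    by (rule inj_on_subset)
  then show ?thesis
    using proj_subset_image[of X "insert x X" D, OF subset_insertI] by (simp add: card_image)
qed

lemma almost_affine_subset_words: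
  "is_almost_affine A n C \<Longrightarrow> C \<subseteq> words A n"
  unfolding is_almost_affine_def almost_affine_code_def by blast

lemma almost_affine_finite:
  assumes "is_almost_affine A n C" "finite A"
  shows "finite C"
  using almost_affine_subset_words[OF assms(1)] assms(2)
  unfolding words_def by (meson finite_PiE finite_atLeastAtMost finite_subset)

lemma almost_affine_coordinate:
  "is_almost_affine A n C \<Longrightarrow> c \<in> C \<Longrightarrow> x \<in> {1..n} \<Longrightarrow> c x \<in> A"
  using almost_affine_subset_words unfolding words_def by (fastforce simp: PiE_iff)

lemma card_proj_eq_power_code_rank:
  assumes "is_almost_affine A n C" "finite A" "card A \<ge> 2" "X \<subseteq> {1..n}"
  shows "card (proj C X) = card A ^ code_rank A C X"
proof -
  obtain k where k: "almost_affine_code A n k C"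
    using assms(1) unfolding is_almost_affine_def by blast
  then have "card C = card A ^ k"
    unfolding almost_affine_code_def by blast
  then have "C \<noteq> {}" using assms(3) by auto
  then have "0 < card (proj C X)"
    using almost_affine_finite[OF assms(1,2)] unfolding proj_def by (simp add: card_gt_0_iff)
  moreover have "log (real (card A)) (real (card (proj C X))) \<in> \<nat>"
    using k assms(4) unfolding almost_affine_code_def by blast
  then obtain j where j: "log (real (card A)) (real (card (proj C X))) = real j"
    by (auto elim: Nats_cases)
  moreover have "1 < real (card A)" using assms(3) by simp
  ultimately have "real (card (proj C X)) = real (card A) ^ j"
    by (metis of_nat_0_less_iff powr_log_cancel powr_realpow less_trans zero_less_one less_irrefl)
  then have "card (proj C X) = card A ^ j"
    by (metis of_nat_eq_iff of_nat_power)
  moreover have "code_rank A C X = j"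
    unfolding code_rank_def j by simp
  ultimately show ?thesis by simp
qed

context
  fixes A :: "'a set" and n :: nat
  assumes finite_alphabet: "finite A" and two_le_card: "card A \<ge> 2"
begin

private lemma power_card_le_iff: "card A ^ i \<le> card A ^ j \<longleftrightarrow> i \<le> j"
  using two_le_card by (simp add: power_increasing_iff)

lemma code_rank_empty:
  assumes "is_almost_affine A n C"
  shows "code_rank A C {} = 0"
proof -
  have "proj C {} \<subseteq> {\<lambda>_. undefined}"
    unfolding proj_def by auto
  then have "card (proj C {}) \<le> card {\<lambda>_::nat. undefined :: 'a}"
    by (rule card_mono[rotated]) simp
  then have "card A ^ code_rank A C {} \<le> card A ^ 0"
    using card_proj_eq_power_code_rank[OF assms finite_alphabet two_le_card] by simp
  then show ?thesis by (simp only: power_card_le_iff)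
qed

lemma code_rank_insert:
  assumes "is_almost_affine A n C" "X \<subseteq> {1..n}" "x \<in> {1..n}"
  shows "code_rank A C X \<le> code_rank A C (insert x X) \<and>
         code_rank A C (insert x X) \<le> code_rank A C X + 1"
proof -
  note card_rank = card_proj_eq_power_code_rank[OF assms(1) finite_alphabet two_le_card]
  have fin: "finite C" using almost_affine_finite[OF assms(1) finite_alphabet] .
  have "card A ^ code_rank A C X \<le> card A ^ code_rank A C (insert x X)"
    using card_proj_mono[OF fin, of X "insert x X"] card_rank assms(2,3) by auto
  moreover have "card A ^ code_rank A C (insert x X) \<le> card A ^ (code_rank A C X + 1)"
    using card_proj_insert_le[OF finite_alphabet fin, of x X] card_rank assms
      almost_affine_coordinate[OF assms(1) _ assms(3)] by (simp add: mult.commute)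
  ultimately show ?thesis by (simp only: power_card_le_iff)
qed

lemma code_rank_subcode_le:
  assumes "is_almost_affine A n C" "is_almost_affine A n D" "D \<subseteq> C" "X \<subseteq> {1..n}"
  shows "code_rank A D X \<le> code_rank A C X"
proof -
  have "card (proj D X) \<le> card (proj C X)"
    using card_proj_subcode_le[OF assms(3) almost_affine_finite[OF assms(1) finite_alphabet]] .
  then show ?thesis
    using card_proj_eq_power_code_rank[OF _ finite_alphabet two_le_card assms(4)] assms(1,2)
    by (simp add: power_card_le_iff)
qed

lemma code_rank_subcode_increment_le:
  assumes C: "is_almost_affine A n C" and D: "is_almost_affine A n D" and "D \<subseteq> C"
    and X: "X \<subseteq> {1..n}" and x: "x \<in> {1..n}"
  shows "int (code_rank A D (insert x X)) - int (code_rank A D X)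
         \<le> int (code_rank A C (insert x X)) - int (code_rank A C X)"
proof (cases "code_rank A C (insert x X) = code_rank A C X")
  case True
  have Xx: "insert x X \<subseteq> {1..n}" using X x by simp
  note card_C = card_proj_eq_power_code_rank[OF C finite_alphabet two_le_card]
  note card_D = card_proj_eq_power_code_rank[OF D finite_alphabet two_le_card]
  have "card (proj C (insert x X)) = card (proj C X)"
    using True card_C[OF X] card_C[OF Xx] by simp
  then have "card (proj D (insert x X)) = card (proj D X)"
    using card_proj_insert_eq_subcode[OF \<open>D \<subseteq> C\<close> almost_affine_finite[OF C finite_alphabet]]
    by blast
  then have "code_rank A D (insert x X) = code_rank A D X"
    using card_D[OF X] card_D[OF Xx] two_le_card by simp
  then show ?thesis using True by simp
next
  case False
  then show ?thesis
    using code_rank_insert[OF C X x] code_rank_insert[OF D X x] by linarith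
qed

end

theorem mainTheorem5:
  fixes A :: "'a set" and n m :: nat and Cs :: "nat \<Rightarrow> (nat \<Rightarrow> 'a) set"
  assumes "finite A" and "card A \<ge> 2"
    and "is_flag A n m Cs"
  shows "demi_matroid {1..n} (flag_rho A m Cs)"
proof -
  have code: "is_almost_affine A n (Cs i)" if "i \<in> {1..m}" for i
    using assms(3) that unfolding is_flag_def by blast
  have subcode: "Cs (Suc i) \<subseteq> Cs i" if "1 \<le> i" "i < m" for i
    using assms(3) that unfolding is_flag_def by auto
  have "flag_rho A m Cs = (\<lambda>X. \<Sum>i = 1..m. (-1) ^ (i + 1) * int (code_rank A (Cs i) X))"
    by (simp add: fun_eq_iff flag_rho_def)
  moreover have "demi_matroid {1..n} \<dots>"
  proof (rule demi_matroid_alternating_sum)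
    fix i X x
    show "i \<in> {1..m} \<Longrightarrow> code_rank A (Cs i) {} = 0"
      using code_rank_empty[OF assms(1,2) code] .
    show "i \<in> {1..m} \<Longrightarrow> X \<subseteq> {1..n} \<Longrightarrow> x \<in> {1..n} \<Longrightarrow>
          code_rank A (Cs i) X \<le> code_rank A (Cs i) (insert x X) \<and>
          code_rank A (Cs i) (insert x X) \<le> code_rank A (Cs i) X + 1"
      using code_rank_insert[OF assms(1,2) code] .
    assume i: "1 \<le> i" "i < m"
    then have codes: "is_almost_affine A n (Cs i)" "is_almost_affine A n (Cs (Suc i))"
      using code by auto
    show "X \<subseteq> {1..n} \<Longrightarrow> code_rank A (Cs (Suc i)) X \<le> code_rank A (Cs i) X"
      using code_rank_subcode_le[OF assms(1,2) codes subcode[OF i]] .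
    show "X \<subseteq> {1..n} \<Longrightarrow> x \<in> {1..n} \<Longrightarrow>
          int (code_rank A (Cs (Suc i)) (insert x X)) - int (code_rank A (Cs (Suc i)) X)
          \<le> int (code_rank A (Cs i) (insert x X)) - int (code_rank A (Cs i) X)"
      using code_rank_subcode_increment_le[OF assms(1,2) codes subcode[OF i]] .
  qed
  ultimately show ?thesis by (simp only:)
qed

end
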